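(* Under the assumptions of the locally linear uniform convergence theorem (namely (C1)–(C5), $S$ compact satisfying (CS), and bandwidth $h\to0$ with $1/(T^rh^{d+r})=o(1)$, $r=\min\{\rho,1\}$, and $Th^{d+1}\to\infty$), $$\sup_{u\in[0,1],x\in S}\Big\|\mathbb{E}\Big[\tfrac1T\mathbf D^\top\mathbf W(\mathbf m-\mathbf D\,\mathfrak m(u,x))\Big]\Big\|_2=O\Big(\tfrac{1}{T^rh^{d-1}}+h^2\Big).$$
   Context: Model $Y_{t,T}=m(t/T,X_{t,T})+\varepsilon_{t,T}$, $X_{t,T}\in\mathbb{R}^d$. (C1) local stationarity: for each $u\in[0,1]$ there is a strictly stationary $\{X_t(u)\}$ with $\|X_{t,T}-X_t(u)\|\le(|t/T-u|+1/T)U_{t,T}(u)$ a.s., $\mathbb{E}[U_{t,T}(u)^\rho]\le C_U$, $\rho>0$. (C2) the density $f(u,x)$ of $X_t(u)$ has continuous partial derivatives in $u$ and $x$. (C3) strong mixing with $\alpha(k)\le Ak^{-\beta}$. (C4) $m$ twice continuously differentiable in $(u,x)$. (C5) $K$ nonnegative, symmetric, bounded, Lipschitz, $K(v)=0$ for $|v|>C_1$, $K_h(v)=h^{-1}K(v/h)$. (CS): $\inf_{x\in S}\liminf_{h\downarrow0}h^{-d}\mathrm{Leb}(S\cap(x+(-C_1h,C_1h)^d))\ge c_S>0$. $\mathbf D$ is the $T\times(d+2)$ matrix with rows $(1,(t/T-u)/h,(X^1_{t,T}-x^1)/h,\dots,(X^d_{t,T}-x^d)/h)$; $\mathbf W=\mathrm{diag}(K_h(u-t/T)\prod_jK_h(x^j-X^j_{t,T}))_{t=1}^T$;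 $\mathbf m=(m(1/T,X_{1,T}),\dots,m(T/T,X_{T,T}))^\top$; $\mathfrak m(u,x)=(m(u,x),h\partial_um(u,x),h\partial_{x^1}m(u,x),\dots,h\partial_{x^d}m(u,x))^\top$. *)

theory Defs
  imports "HOL-Probability.Probability"
begin

definition strictly_stationary ::
  "'a measure \<Rightarrow> (int \<Rightarrow> 'a \<Rightarrow> 'b::topological_space) \<Rightarrow> bool" where
  "strictly_stationary M Z \<longleftrightarrow>
     (\<forall>t. Z t \<in> borel_measurable M) \<and>
     (\<forall>(k::int) (n::nat).
        distr M (PiM {..n} (\<lambda>_. borel)) (\<lambda>\<omega>. \<lambda>i\<in>{..n}. Z (k + int i) \<omega>)
      = distr M (PiM {..n} (\<lambda>_. borel)) (\<lambda>\<omega>. \<lambda>i\<in>{..n}. Z (int i) \<omega>))"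

definition array_sigma ::
  "'a measure \<Rightarrow> (nat \<Rightarrow> nat \<Rightarrow> 'a \<Rightarrow> 'b::topological_space) \<Rightarrow> nat \<Rightarrow> nat set \<Rightarrow> 'a set set" where
  "array_sigma M Z T I =
     sigma_sets (space M) (\<Union>s\<in>I. {Z T s -` B \<inter> space M | B. B \<in> sets borel})"

definition alpha_mixing ::
  "'a measure \<Rightarrow> (nat \<Rightarrow> nat \<Rightarrow> 'a \<Rightarrow> 'b::topological_space) \<Rightarrow> nat \<Rightarrow> real" where
  "alpha_mixing M Z k =
     Sup {\<bar>measure M (A \<inter> B) - measure M A * measure M B\<bar> | T t A B.
            A \<in> array_sigma M Z T {1..t} \<and> B \<in> array_sigma M Z T {t+k..T}}"

definition Kh :: "(real \<Rightarrow> real) \<Rightarrow> real \<Rightarrow> real \<Rightarrow> real" where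
  "Kh K h v = K (v / h) / h"

text \<open>Row t of the design matrix D, as an element of R x R x R^d (Euclidean norm).\<close>
definition design_row ::
  "(nat \<Rightarrow> nat \<Rightarrow> 'a \<Rightarrow> (real^'d)) \<Rightarrow> nat \<Rightarrow> real \<Rightarrow> real \<Rightarrow> (real^'d) \<Rightarrow> nat \<Rightarrow> 'a
     \<Rightarrow> real \<times> real \<times> (real^'d)" where
  "design_row X T h u x t \<omega> = (1, (real t / real T - u) / h, (1 / h) *\<^sub>R (X T t \<omega> - x))"

text \<open>Diagonal entry t of the weight matrix W.\<close>
definition weight ::
  "(real \<Rightarrow> real) \<Rightarrow> (nat \<Rightarrow> nat \<Rightarrow> 'a \<Rightarrow> (real^'d::finite)) \<Rightarrow> nat \<Rightarrow> real \<Rightarrow> real \<Rightarrow> (real^'d)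
     \<Rightarrow> nat \<Rightarrow> 'a \<Rightarrow> real" where
  "weight K X T h u x t \<omega> =
     Kh K h (u - real t / real T) * (\<Prod>j\<in>UNIV. Kh K h (x $ j - X T t \<omega> $ j))"

text \<open>The vector (m, h d_u m, h d_{x^1} m, ..., h d_{x^d} m)(u,x), where Dm is the
  (Frechet) derivative of (u,x) \<mapsto> m u x.\<close>
definition mfrak ::
  "(real \<Rightarrow> (real^'d) \<Rightarrow> real) \<Rightarrow> (real \<times> (real^'d) \<Rightarrow> (real \<times> (real^'d)) \<Rightarrow>\<^sub>L real)
     \<Rightarrow> real \<Rightarrow> real \<Rightarrow> (real^'d::finite) \<Rightarrow> real \<times> real \<times> (real^'d)" where
  "mfrak m Dm h u x =
     (m u x, h * blinfun_apply (Dm (u, x)) (1, 0),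
      h *\<^sub>R (\<chi> j. blinfun_apply (Dm (u, x)) (0, axis j 1)))"

text \<open>The random vector (1/T) D^T W (m - D mfrak(u,x)).\<close>
definition bias_vec ::
  "(real \<Rightarrow> real) \<Rightarrow> (real \<Rightarrow> (real^'d) \<Rightarrow> real) \<Rightarrow> (real \<times> (real^'d) \<Rightarrow> (real \<times> (real^'d)) \<Rightarrow>\<^sub>L real)
     \<Rightarrow> (nat \<Rightarrow> nat \<Rightarrow> 'a \<Rightarrow> (real^'d::finite)) \<Rightarrow> nat \<Rightarrow> real \<Rightarrow> real \<Rightarrow> (real^'d)
     \<Rightarrow> 'a \<Rightarrow> real \<times> real \<times> (real^'d)" where
  "bias_vec K m Dm X T h u x \<omega> =
     (1 / real T) *\<^sub>R
       (\<Sum>t\<in>{1..T}. (weight K X T h u x t \<omega> *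
            (m (real t / real T) (X T t \<omega>)
             - inner (design_row X T h u x t \<omega>) (mfrak m Dm h u x)))
          *\<^sub>R design_row X T h u x t \<omega>)"

end

(*
  Row t of D applied to mfrak(u,x) is the first-order Taylor polynomial of m at (u,x),
  evaluated at (t/T, X_{t,T}). The weight W_t vanishes unless t/T and X_{t,T} lie within
  O(h) of u and x, so by Taylor's theorem the t-th summand of D^T W (m - D mfrak) has norm
  O(h^2) W_t. Replacing X_{t,T} by the stationary X_t(t/T), whose density is bounded near x,
  changes E W_t by O((T h)^(-r) h^(-d)) = o(1), by the Lipschitz continuity of K and the
  moment bound on U. Hence E W_t = O(K_h(u - t/T)), and these sum to O(T) over the grid
  t/T. The bias is therefore O(h^2), which implies the stated rate.
*)
theory Submission
  imports Defs
begin

lemma abs_prod_diff_le: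
  fixes a b :: "'i \<Rightarrow> real"
  assumes "finite A" "\<And>i. i \<in> A \<Longrightarrow> \<bar>a i\<bar> \<le> B" "\<And>i. i \<in> A \<Longrightarrow> \<bar>b i\<bar> \<le> B"
  shows "\<bar>prod a A - prod b A\<bar> \<le> max B 1 ^ card A * (\<Sum>i\<in>A. \<bar>a i - b i\<bar>)"
  using assms
proof (induction A rule: finite_induct)
  case empty
  then show ?case by simp
next
  case (insert j A)
  let ?B = "max B 1"
  have IH: "\<bar>prod a A - prod b A\<bar> \<le> ?B ^ card A * (\<Sum>i\<in>A. \<bar>a i - b i\<bar>)"
    using insert by auto
  have aj: "\<bar>a j\<bar> \<le> ?B" using insert by force
  have "\<bar>prod b A\<bar> = (\<Prod>i\<in>A. \<bar>b i\<bar>)" by (simp add: abs_prod)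
  also have "\<dots> \<le> ?B ^ card A"
    using prod_mono[of A "\<lambda>i. \<bar>b i\<bar>" "\<lambda>_. ?B"] insert by force
  finally have bA: "\<bar>prod b A\<bar> \<le> ?B ^ card A" .
  have "prod a (insert j A) - prod b (insert j A) = a j * (prod a A - prod b A) + (a j - b j) * prod b A"
    using insert by (simp add: algebra_simps)
  then have "\<bar>prod a (insert j A) - prod b (insert j A)\<bar>
      \<le> \<bar>a j\<bar> * \<bar>prod a A - prod b A\<bar> + \<bar>a j - b j\<bar> * \<bar>prod b A\<bar>"
    by (metis abs_mult abs_triangle_ineq)
  also have "\<dots> \<le> ?B * (?B ^ card A * (\<Sum>i\<in>A. \<bar>a i - b i\<bar>)) + \<bar>a j - b j\<bar> * ?B ^ card A"
    by (intro add_mono mult_mono IH aj bA) auto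
  also have "\<dots> \<le> ?B ^ card (insert j A) * (\<Sum>i\<in>insert j A. \<bar>a i - b i\<bar>)"
  proof -
    have "?B ^ card A \<le> ?B ^ card (insert j A)"
      using insert by (intro power_increasing) auto
    then have "\<bar>a j - b j\<bar> * ?B ^ card A \<le> \<bar>a j - b j\<bar> * ?B ^ card (insert j A)"
      by (intro mult_left_mono) auto
    then show ?thesis using insert by (simp add: algebra_simps)
  qed
  finally show ?case .
qed

lemma min_one_le_powr:
  fixes z r :: real
  assumes "0 \<le> z" "0 < r" "r \<le> 1"
  shows "min 1 z \<le> z powr r"
proof (cases "z \<le> 1")
  case True
  then show ?thesis using assms powr_mono'[of r 1 z] by (cases "z = 0") auto
next
  case False
  then show ?thesis using assms by (simp add: ge_one_powr_ge_zero)
qed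

lemma powr_le_one_plus_powr:
  fixes z r \<rho> :: real
  assumes "0 \<le> z" "0 \<le> r" "r \<le> \<rho>"
  shows "z powr r \<le> 1 + z powr \<rho>"
proof (cases "z \<le> 1")
  case True
  then have "z powr r \<le> 1" using assms by (intro powr_le1) auto
  then show ?thesis using powr_ge_zero[of z \<rho>] by linarith
next
  case False
  then have "z powr r \<le> z powr \<rho>" using assms by (intro powr_mono) auto
  then show ?thesis by linarith
qed

lemma card_le_length_of_real_interval:
  fixes N :: "nat set"
  assumes "finite N" "\<And>n. n \<in> N \<Longrightarrow> a \<le> real n \<and> real n \<le> b" "a \<le> b"
  shows "real (card N) \<le> b - a + 1"
proof (cases "N = {}")
  case False
  have "card N \<le> card {Min N..Max N}"
    using assms(1) False by (intro card_mono) auto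
  moreover have "Min N \<le> Max N" using assms(1) False by simp
  moreover have "a \<le> real (Min N)" "real (Max N) \<le> b"
    using assms(1,2) False by (simp_all add: Min_in Max_in)
  ultimately show ?thesis by (simp add: of_nat_diff)
qed (use assms in simp)

lemma card_grid_near_le:
  fixes u e :: real and T :: nat
  assumes "0 < T" "0 \<le> e"
  shows "real (card {t\<in>{1..T}. \<bar>u - real t / real T\<bar> \<le> e}) \<le> 2 * e * real T + 1"
proof -
  have "real (card {t\<in>{1..T}. \<bar>u - real t / real T\<bar> \<le> e})
      \<le> (real T * u + e * real T) - (real T * u - e * real T) + 1"
  proof (rule card_le_length_of_real_interval)
    fix t assume "t \<in> {t\<in>{1..T}. \<bar>u - real t / real T\<bar> \<le> e}"
    then have "\<bar>real T * u - real t\<bar> \<le> e * real T"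
      using assms by (auto simp: field_simps abs_le_iff)
    then show "real T * u - e * real T \<le> real t \<and> real t \<le> real T * u + e * real T"
      by (auto simp: abs_le_iff)
  qed (use assms in auto)
  then show ?thesis by simp
qed

lemma norm_diff_le_of_mem_cube:
  fixes x y :: "real^'d"
  assumes "y \<in> cbox (x - e *\<^sub>R One) (x + e *\<^sub>R One)"
  shows "norm (y - x) \<le> real CARD('d) * e"
proof -
  have "\<bar>(y - x) $ j\<bar> \<le> e" for j
  proof -
    have "x $ j - e \<le> y $ j \<and> y $ j \<le> x $ j + e"
      using assms by (auto simp: mem_box_cart simp flip: Cart_1)
    then show ?thesis by (simp add: abs_le_iff)
  qed
  then have "norm (y - x) \<le> (\<Sum>j\<in>(UNIV::'d set). e)"
    by (intro order_trans[OF norm_le_l1_cart] sum_mono)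
  then show ?thesis by simp
qed

lemma measure_lborel_cube:
  fixes x :: "real^'d"
  assumes "0 \<le> e"
  shows "measure lborel (cbox (x - e *\<^sub>R One) (x + e *\<^sub>R One)) = (2 * e) ^ CARD('d)"
proof -
  have "(x + e *\<^sub>R One) - (x - e *\<^sub>R One) = (2 * e) *\<^sub>R (One::real^'d)"
    by (simp add: algebra_simps scaleR_2 flip: scaleR_add_left)
  then show ?thesis
    using assms by (simp add: measure_lborel_cbox_eq inner_diff_left inner_add_left)
qed

lemma taylor_remainder_le:
  fixes g :: "'a::real_normed_vector \<Rightarrow> real" and Dg :: "'a \<Rightarrow> 'a \<Rightarrow>\<^sub>L real"
    and D2g :: "'a \<Rightarrow> 'a \<Rightarrow>\<^sub>L ('a \<Rightarrow>\<^sub>L real)"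
  assumes Q: "convex Q"
    and dg: "\<And>q. q \<in> Q \<Longrightarrow> (g has_derivative blinfun_apply (Dg q)) (at q within Q)"
    and d2g: "\<And>q. q \<in> Q \<Longrightarrow> (Dg has_derivative blinfun_apply (D2g q)) (at q within Q)"
    and bd: "\<And>q. q \<in> Q \<Longrightarrow> norm (D2g q) \<le> M2"
    and p0: "p0 \<in> Q" and p: "p \<in> Q"
  shows "\<bar>g p - g p0 - Dg p0 (p - p0)\<bar> \<le> M2 * (norm (p - p0))\<^sup>2"
proof -
  define S where "S = Q \<inter> cball p0 (norm (p - p0))"
  have M2: "0 \<le> M2" using bd[OF p0] norm_ge_zero order_trans by blast
  have Dg_lip: "norm (Dg q - Dg p0) \<le> M2 * norm (q - p0)" if "q \<in> Q" for q
    by (rule differentiable_bound[OF Q d2g _ that p0]) (simp_all add: norm_blinfun.rep_eq[symmetric] bd)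
  have segment: "p0 + t *\<^sub>R (p - p0) \<in> S" if "t \<in> {0..1}" for t
  proof -
    have "p0 + t *\<^sub>R (p - p0) \<in> Q"
      using convexD_alt[OF Q p0 p, of t] that by (simp add: algebra_simps)
    moreover have "norm (t *\<^sub>R (p - p0)) \<le> norm (p - p0)"
      using that by (auto simp: mult_left_le_one_le)
    ultimately show ?thesis unfolding S_def by (auto simp: dist_norm)
  qed
  have "onorm (blinfun_apply (Dg q) - blinfun_apply (Dg p0)) \<le> M2 * norm (p - p0)" if q: "q \<in> S" for q
  proof -
    have "onorm (blinfun_apply (Dg q) - blinfun_apply (Dg p0)) = norm (Dg q - Dg p0)"
      by (simp add: norm_blinfun.rep_eq minus_blinfun.rep_eq fun_diff_def)
    also have "\<dots> \<le> M2 * norm (q - p0)" using Dg_lip q unfolding S_def by auto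
    also have "\<dots> \<le> M2 * norm (p - p0)"
      using M2 q unfolding S_def by (auto simp: dist_norm norm_minus_commute intro: mult_left_mono)
    finally show ?thesis .
  qed
  moreover have "(g has_derivative blinfun_apply (Dg q)) (at q within S)" if "q \<in> S" for q
    using that dg has_derivative_subset unfolding S_def by blast
  moreover have "p0 \<in> S" using p0 unfolding S_def by auto
  ultimately have "norm (g p - g p0 - Dg p0 (p - p0)) \<le> norm (p - p0) * (M2 * norm (p - p0))"
    by (intro differentiable_bound_linearization[where S=S and f'="\<lambda>q. blinfun_apply (Dg q)"] segment)
  then show ?thesis by (simp add: power2_eq_square algebra_simps)
qed

lemma upper_bound_on_Icc_times_compact:
  fixes f fu :: "real \<Rightarrow> 'b::real_normed_vector \<Rightarrow> real"
  assumes du: "\<And>u y. u \<in> {0..1} \<Longrightarrow> ((\<lambda>v. f v y) has_real_derivative fu u y) (at u within {0..1})"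
    and fu_cont: "continuous_on ({0..1} \<times> Y) (\<lambda>(u, y). fu u y)"
    and f0_cont: "continuous_on Y (f 0)"
    and Y: "compact Y"
  shows "\<exists>F\<ge>0. \<forall>u\<in>{0..1}. \<forall>y\<in>Y. f u y \<le> F"
proof -
  have "bounded ((\<lambda>(u, y). fu u y) ` ({0..1} \<times> Y))"
    by (intro compact_imp_bounded compact_continuous_image fu_cont compact_Times Y compact_Icc)
  then obtain F1 where F1: "\<And>u y. u \<in> {0..1} \<Longrightarrow> y \<in> Y \<Longrightarrow> \<bar>fu u y\<bar> \<le> F1"
    unfolding bounded_iff by force
  have "bounded (f 0 ` Y)" by (intro compact_imp_bounded compact_continuous_image f0_cont Y)
  then obtain F0 where F0: "\<And>y. y \<in> Y \<Longrightarrow> \<bar>f 0 y\<bar> \<le> F0"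
    unfolding bounded_iff by force
  have "f u y \<le> F0 + F1" if u: "u \<in> {0..1}" and y: "y \<in> Y" for u y
  proof -
    have "norm (f u y - f 0 y) \<le> F1 * norm (u - 0)"
    proof (rule differentiable_bound[where f="\<lambda>v. f v y" and f'="\<lambda>v. (*) (fu v y)"])
      fix v :: real assume v: "v \<in> {0..1}"
      show "((\<lambda>v. f v y) has_derivative (*) (fu v y)) (at v within {0..1})"
        using du[OF v] by (rule has_field_derivative_imp_has_derivative)
      show "onorm ((*) (fu v y)) \<le> F1"
        using F1[OF v y] onorm_scaleR[of "\<lambda>x::real. x" "fu v y"] by (simp add: onorm_id)
    qed (use u in auto)
    moreover have "F1 * u \<le> F1"
      using u F1[OF u y] by (intro mult_left_le) auto
    ultimately show ?thesis using u F0[OF y] by simp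
  qed
  then show ?thesis
    by (intro exI[of _ "max 0 (F0 + F1)"]) force
qed

lemma measure_preimage_le_density_bound:
  fixes Y :: "'a \<Rightarrow> 'b::euclidean_space"
  assumes "distributed M lborel Y (\<lambda>y. ennreal (F y))"
    and "A \<in> sets borel" "emeasure lborel A < \<infinity>"
    and "\<And>y. y \<in> A \<Longrightarrow> F y \<le> Fm" "0 \<le> Fm"
  shows "measure M (Y -` A \<inter> space M) \<le> Fm * measure lborel A"
proof -
  have "emeasure M (Y -` A \<inter> space M) = (\<integral>\<^sup>+y. ennreal (F y) * indicator A y \<partial>lborel)"
    by (rule distributed_emeasure[OF assms(1)]) (use assms(2) in simp)
  also have "\<dots> \<le> (\<integral>\<^sup>+y. ennreal Fm * indicator A y \<partial>lborel)"
    using assms(4) by (intro nn_integral_mono) (auto simp: indicator_def ennreal_leI)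
  also have "\<dots> = ennreal Fm * emeasure lborel A"
    using assms(2) by (simp add: nn_integral_cmult_indicator)
  also have "\<dots> = ennreal (Fm * measure lborel A)"
    using assms(3,5) by (simp add: emeasure_eq_ennreal_measure ennreal_mult)
  finally show ?thesis
    using assms(5) by (simp add: measure_def enn2real_leI)
qed

lemma eventually_bandwidth_small:
  fixes h :: "nat \<Rightarrow> real"
  assumes h_pos: "\<And>T. 0 < h T" and h_lim: "h \<longlonglongrightarrow> 0"
    and rate: "filterlim (\<lambda>T. real T * h T ^ (k + 1)) at_top sequentially"
  shows "eventually (\<lambda>T. a * h T \<le> 1 \<and> 1 \<le> real T * h T) sequentially"
proof -
  have "eventually (\<lambda>T. h T < 1 / (\<bar>a\<bar> + 1)) sequentially"
    using h_lim by (intro order_tendstoD(2)) auto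
  moreover have "eventually (\<lambda>T. 1 \<le> real T * h T ^ (k + 1)) sequentially"
    using rate unfolding filterlim_at_top by blast
  ultimately show ?thesis
  proof eventually_elim
    case (elim T)
    then have small: "(\<bar>a\<bar> + 1) * h T < 1"
      by (simp add: field_simps add_pos_nonneg)
    moreover have "a * h T \<le> (\<bar>a\<bar> + 1) * h T" "h T \<le> (\<bar>a\<bar> + 1) * h T"
      using h_pos[of T] by (simp_all add: mult_right_mono)
    ultimately have "a * h T \<le> 1" "h T \<le> 1" by linarith+
    moreover have "h T ^ (k + 1) \<le> h T"
      using \<open>h T \<le> 1\<close> h_pos[of T] by (simp add: mult_left_le power_le_one)
    then have "real T * h T ^ (k + 1) \<le> real T * h T" by (intro mult_left_mono) auto
    ultimately show ?case using elim by linarith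
  qed
qed

section \<open>Design rows and kernel weights\<close>

lemma inner_design_row_mfrak:
  fixes X :: "nat \<Rightarrow> nat \<Rightarrow> 'a \<Rightarrow> real^'d"
    and Dm :: "real \<times> (real^'d) \<Rightarrow> (real \<times> (real^'d)) \<Rightarrow>\<^sub>L real"
  assumes h: "h \<noteq> 0"
  shows "inner (design_row X T h u x t \<omega>) (mfrak m Dm h u x)
    = m u x + Dm (u, x) (real t / real T - u, X T t \<omega> - x)"
proof -
  define D where "D = Dm (u, x)"
  define a where "a = real t / real T - u"
  define v where "v = X T t \<omega> - x"
  have "bounded_linear (\<lambda>w::real^'d. D (0, w))"
    by (intro bounded_linear_compose[OF blinfun.bounded_linear_right] bounded_linear_Pair
        bounded_linear_zero bounded_linear_ident)
  then have lin: "linear (\<lambda>w::real^'d. D (0, w))" by (rule bounded_linear.linear)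
  have "D (0, v) = D (0, \<Sum>j\<in>UNIV. v $ j *\<^sub>R axis j 1)"
    using basis_expansion[of v] by (simp add: scalar_mult_eq_scaleR)
  also have "\<dots> = (\<Sum>j\<in>UNIV. v $ j * D (0, axis j 1))"
    using linear_sum[OF lin, of "\<lambda>j. v $ j *\<^sub>R axis j 1" UNIV] linear_scale[OF lin] by simp
  finally have "inner ((1 / h) *\<^sub>R v) (h *\<^sub>R (\<chi> j. D (0, axis j 1))) = D (0, v)"
    using h by (simp add: inner_vec_def)
  moreover have "D (a, v) = a * D (1, 0) + D (0, v)"
    using blinfun.add_right[of D "a *\<^sub>R (1, 0)" "(0, v)"] blinfun.scaleR_right[of D a "(1, 0)"] by simp
  ultimately show ?thesis
    using h unfolding design_row_def mfrak_def D_def[symmetric] a_def[symmetric] v_def[symmetric]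
    by simp
qed

definition kernel_prod :: "(real \<Rightarrow> real) \<Rightarrow> real \<Rightarrow> real^'d \<Rightarrow> real^'d \<Rightarrow> real" where
  "kernel_prod K h x z = (\<Prod>j\<in>UNIV. K ((x $ j - z $ j) / h))"

lemma weight_eq_kernel_prod:
  fixes X :: "nat \<Rightarrow> nat \<Rightarrow> 'a \<Rightarrow> real^'d"
  shows "weight K X T h u x t \<omega>
     = Kh K h (u - real t / real T) * kernel_prod K h x (X T t \<omega>) / h ^ CARD('d)"
  unfolding weight_def kernel_prod_def Kh_def by (simp add: prod_dividef)

locale compact_kernel =
  fixes K :: "real \<Rightarrow> real" and B L c :: real
  assumes nonneg: "\<And>v. 0 \<le> K v"
    and le_bound: "\<And>v. K v \<le> B"
    and lipschitz: "L-lipschitz_on UNIV K"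
    and vanishes: "\<And>v. c < \<bar>v\<bar> \<Longrightarrow> K v = 0"
    and support_pos: "0 < c"
begin

lemma bound_nonneg: "0 \<le> B"
  using nonneg le_bound order_trans by blast

lemma lipschitz_nonneg: "0 \<le> L"
  using lipschitz by (rule lipschitz_on_nonneg)

lemma abs_diff_le: "\<bar>K v - K w\<bar> \<le> L * \<bar>v - w\<bar>"
  using lipschitz_onD[OF lipschitz] by (simp add: dist_real_def)

lemma borel_measurable [measurable]: "K \<in> borel_measurable borel"
  by (rule borel_measurable_continuous_onI[OF lipschitz_on_continuous_on[OF lipschitz]])

lemma Kh_nonneg: "0 < h \<Longrightarrow> 0 \<le> Kh K h v"
  unfolding Kh_def by (simp add: nonneg)

lemma Kh_le: "0 < h \<Longrightarrow> Kh K h v \<le> B / h"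
  unfolding Kh_def by (simp add: le_bound divide_right_mono)

lemma Kh_eq_0:
  assumes "0 < h" "c * h < \<bar>v\<bar>"
  shows "Kh K h v = 0"
proof -
  have "c < \<bar>v / h\<bar>" using assms by (simp add: abs_divide pos_less_divide_eq)
  then show ?thesis unfolding Kh_def by (simp add: vanishes)
qed

lemma sum_Kh_grid_le:
  assumes h: "0 < h" and Th: "1 \<le> real T * h"
  shows "(\<Sum>t\<in>{1..T}. Kh K h (u - real t / real T)) \<le> (2 * c + 1) * B * real T"
proof -
  have T: "0 < T" using Th by (cases T) auto
  have "(\<Sum>t\<in>{1..T}. Kh K h (u - real t / real T))
      \<le> (\<Sum>t\<in>{1..T}. if \<bar>u - real t / real T\<bar> \<le> c * h then B / h else 0)"
    using Kh_le Kh_eq_0 h by (intro sum_mono) (auto simp: not_le)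
  also have "\<dots> = real (card {t\<in>{1..T}. \<bar>u - real t / real T\<bar> \<le> c * h}) * (B / h)"
    by (simp add: sum.inter_filter[symmetric])
  also have "\<dots> \<le> (2 * (c * h) * real T + 1) * (B / h)"
    using bound_nonneg h support_pos T by (intro mult_right_mono card_grid_near_le) auto
  also have "\<dots> = 2 * c * B * real T + B / h"
    using h by (simp add: field_simps)
  \<comment> \<open>The extra grid point in the count 2 c h T + 1 is absorbed since T h is at least 1.\<close>
  also have "B / h \<le> B * real T"
    using mult_left_mono[of "1 / h" "real T" B] Th h bound_nonneg by (simp add: field_simps)
  finally show ?thesis by (simp add: algebra_simps)
qed

lemma kernel_prod_nonneg: "0 \<le> kernel_prod K h x z"
  unfolding kernel_prod_def by (simp add: prod_nonneg nonneg)

lemma kernel_prod_le: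
  fixes x z :: "real^'d"
  shows "kernel_prod K h x z \<le> B ^ CARD('d)"
  unfolding kernel_prod_def
  using prod_mono[of UNIV "\<lambda>j. K ((x $ j - z $ j) / h)" "\<lambda>_. B"] nonneg le_bound by simp

lemma kernel_prod_eq_0:
  fixes x z :: "real^'d"
  assumes h: "0 < h" and z: "z \<notin> cbox (x - (c * h) *\<^sub>R One) (x + (c * h) *\<^sub>R One)"
  shows "kernel_prod K h x z = 0"
proof -
  obtain j where "\<not> (x $ j - c * h \<le> z $ j \<and> z $ j \<le> x $ j + c * h)"
    using z by (auto simp: mem_box_cart simp flip: Cart_1)
  then have "c * h < \<bar>x $ j - z $ j\<bar>" by (cases "z $ j \<le> x $ j") auto
  then have "c < \<bar>(x $ j - z $ j) / h\<bar>"
    using h by (simp add: abs_divide pos_less_divide_eq)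
  then have "K ((x $ j - z $ j) / h) = 0" by (rule vanishes)
  then show ?thesis unfolding kernel_prod_def by (intro prod_zero) auto
qed

lemma borel_measurable_kernel_prod [measurable]: "kernel_prod K h x \<in> borel_measurable borel"
  unfolding kernel_prod_def by measurable

lemma kernel_prod_diff_le:
  fixes x z z' :: "real^'d"
  assumes h: "0 < h"
  shows "\<bar>kernel_prod K h x z - kernel_prod K h x z'\<bar>
    \<le> max B 1 ^ CARD('d) * max 2 (L * CARD('d)) * min 1 (norm (z - z') / h)"
proof -
  define w where "w = norm (z - z') / h"
  define B1 where "B1 = max B 1 ^ CARD('d)"
  have "B ^ CARD('d) \<le> B1"
    unfolding B1_def using bound_nonneg by (intro power_mono) auto
  then have crude: "\<bar>kernel_prod K h x z - kernel_prod K h x z'\<bar> \<le> 2 * B1"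
    using kernel_prod_nonneg[of h x z] kernel_prod_nonneg[of h x z']
      kernel_prod_le[of h x z] kernel_prod_le[of h x z'] by linarith
  have "\<bar>K ((x $ j - z $ j) / h) - K ((x $ j - z' $ j) / h)\<bar> \<le> L * w" for j
  proof -
    have "(x $ j - z $ j) / h - (x $ j - z' $ j) / h = - ((z - z') $ j / h)"
      by (simp add: diff_divide_distrib)
    then have "\<bar>(x $ j - z $ j) / h - (x $ j - z' $ j) / h\<bar> = \<bar>(z - z') $ j\<bar> / h"
      using h by (simp add: abs_divide)
    also have "\<dots> \<le> w" unfolding w_def using h by (intro divide_right_mono component_le_norm_cart) auto
    finally show ?thesis using abs_diff_le lipschitz_nonneg by (meson mult_left_mono order_trans)
  qed
  moreover have "\<bar>kernel_prod K h x z - kernel_prod K h x z'\<bar>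
      \<le> B1 * (\<Sum>j\<in>UNIV. \<bar>K ((x $ j - z $ j) / h) - K ((x $ j - z' $ j) / h)\<bar>)"
    unfolding kernel_prod_def B1_def
    by (rule abs_prod_diff_le) (simp_all add: abs_of_nonneg nonneg le_bound)
  ultimately have "\<bar>kernel_prod K h x z - kernel_prod K h x z'\<bar> \<le> B1 * (\<Sum>j\<in>(UNIV::'d set). L * w)"
    unfolding B1_def by (meson order_trans mult_left_mono sum_mono zero_le_power max.cobounded2 zero_le_one)
  then have fine: "\<bar>kernel_prod K h x z - kernel_prod K h x z'\<bar> \<le> B1 * (L * CARD('d) * w)"
    by (simp add: mult_ac)
  have B1: "1 \<le> B1" unfolding B1_def by simp
  show ?thesis
  proof (cases "w \<le> 1")
    case True
    have "L * CARD('d) * w \<le> max 2 (L * CARD('d)) * w"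
      unfolding w_def using h by (intro mult_right_mono) auto
    then have "B1 * (L * CARD('d) * w) \<le> B1 * max 2 (L * CARD('d)) * w"
      using B1 by (simp add: mult_left_mono mult.assoc)
    then show ?thesis using fine True unfolding w_def B1_def by simp
  next
    case False
    have "2 * B1 \<le> B1 * max 2 (L * CARD('d))" using B1 by simp
    with crude False show ?thesis unfolding w_def[symmetric] B1_def[symmetric] by simp
  qed
qed

section \<open>Expected kernel weights\<close>

lemma integrable_kernel_prod:
  fixes Y :: "'a \<Rightarrow> real^'d"
  assumes "finite_measure M" "Y \<in> borel_measurable M"
  shows "integrable M (\<lambda>\<omega>. kernel_prod K h x (Y \<omega>))"
  using assms
  by (intro finite_measure.integrable_const_bound[where B="B ^ CARD('d)"])
    (auto simp: abs_of_nonneg kernel_prod_nonneg kernel_prod_le)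

lemma expectation_kernel_prod_le_density:
  fixes Y :: "'a \<Rightarrow> real^'d" and x :: "real^'d"
  assumes M: "prob_space M"
    and Y: "distributed M lborel Y (\<lambda>y. ennreal (F y))"
    and F_le: "\<And>y. y \<in> cbox (x - (c * h) *\<^sub>R One) (x + (c * h) *\<^sub>R One) \<Longrightarrow> F y \<le> Fm"
    and Fm: "0 \<le> Fm" and h: "0 < h"
  shows "(\<integral>\<omega>. kernel_prod K h x (Y \<omega>) \<partial>M) \<le> B ^ CARD('d) * Fm * (2 * c * h) ^ CARD('d)"
proof -
  interpret prob_space M by (rule M)
  define A where "A = cbox (x - (c * h) *\<^sub>R One) (x + (c * h) *\<^sub>R One)"
  have [measurable]: "Y \<in> borel_measurable M" using distributed_measurable[OF Y] by simp
  have YA: "Y -` A \<inter> space M \<in> sets M" unfolding A_def by measurable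
  have "(\<integral>\<omega>. kernel_prod K h x (Y \<omega>) \<partial>M) \<le> (\<integral>\<omega>. B ^ CARD('d) * indicator (Y -` A \<inter> space M) \<omega> \<partial>M)"
  proof (rule integral_mono)
    show "integrable M (\<lambda>\<omega>. kernel_prod K h x (Y \<omega>))"
      by (intro integrable_kernel_prod) simp_all
    show "integrable M (\<lambda>\<omega>. B ^ CARD('d) * indicator (Y -` A \<inter> space M) \<omega>)"
      using YA by (intro integrable_mult_right integrable_real_indicator) (auto simp: less_top[symmetric])
    fix \<omega> assume "\<omega> \<in> space M"
    then show "kernel_prod K h x (Y \<omega>) \<le> B ^ CARD('d) * indicator (Y -` A \<inter> space M) \<omega>"
      using kernel_prod_eq_0[OF h, of "Y \<omega>" x] kernel_prod_le[of h x "Y \<omega>"] bound_nonneg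
      unfolding A_def by (cases "Y \<omega> \<in> A") (auto simp: A_def)
  qed
  also have "\<dots> = B ^ CARD('d) * measure M (Y -` A \<inter> space M)" by simp
  also have "\<dots> \<le> B ^ CARD('d) * (Fm * measure lborel A)"
    using bound_nonneg emeasure_lborel_cbox_finite
    by (intro mult_left_mono measure_preimage_le_density_bound[OF Y _ _ F_le Fm]) (auto simp: A_def)
  also have "measure lborel A = (2 * (c * h)) ^ CARD('d)"
    unfolding A_def using support_pos h by (intro measure_lborel_cube) simp
  finally show ?thesis by (simp add: mult.assoc)
qed

lemma expectation_kernel_prod_diff_le:
  fixes X Y :: "'a \<Rightarrow> real^'d" and x :: "real^'d"
  assumes M: "prob_space M"
    and [measurable]: "X \<in> borel_measurable M" "Y \<in> borel_measurable M" "V \<in> borel_measurable M"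
    and close: "AE \<omega> in M. norm (X \<omega> - Y \<omega>) \<le> V \<omega> / T"
    and moment: "(\<integral>\<^sup>+\<omega>. ennreal (V \<omega> powr \<rho>) \<partial>M) \<le> ennreal CV" and CV: "0 \<le> CV"
    and r: "0 < r" "r \<le> 1" "r \<le> \<rho>" and T: "0 < T" and h: "0 < h"
  shows "(\<integral>\<omega>. \<bar>kernel_prod K h x (X \<omega>) - kernel_prod K h x (Y \<omega>)\<bar> \<partial>M)
    \<le> max B 1 ^ CARD('d) * max 2 (L * CARD('d)) * (1 + CV) / (T * h) powr r"
proof -
  interpret prob_space M by (rule M)
  define \<Lambda> where "\<Lambda> = max B 1 ^ CARD('d) * max 2 (L * CARD('d))"
  define a where "a = \<Lambda> / (T * h) powr r"
  have \<Lambda>: "0 \<le> \<Lambda>" using lipschitz_nonneg by (simp add: \<Lambda>_def)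
  then have a: "0 \<le> a" by (simp add: a_def)
  have pointwise: "\<bar>kernel_prod K h x (X \<omega>) - kernel_prod K h x (Y \<omega>)\<bar> \<le> a * (1 + V \<omega> powr \<rho>)"
    if XY: "norm (X \<omega> - Y \<omega>) \<le> V \<omega> / T" for \<omega>
  proof -
    have "0 \<le> V \<omega> / T" using XY norm_ge_zero order_trans by blast
    then have V: "0 \<le> V \<omega>" using T by (simp add: zero_le_divide_iff)
    have "norm (X \<omega> - Y \<omega>) / h \<le> V \<omega> / (T * h)"
      using XY h by (simp add: divide_right_mono flip: divide_divide_eq_left)
    then have "min 1 (norm (X \<omega> - Y \<omega>) / h) \<le> min 1 (V \<omega> / (T * h))"
      by (rule min.mono[OF order_refl])
    \<comment> \<open>Interpolating between the Lipschitz and the trivial bound needs only an r-th moment.\<close>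
    also have "\<dots> \<le> (V \<omega> / (T * h)) powr r"
      using V T h r by (intro min_one_le_powr) auto
    also have "\<dots> \<le> (1 + V \<omega> powr \<rho>) / (T * h) powr r"
      using V T h r powr_le_one_plus_powr[of "V \<omega>" r \<rho>]
      by (simp add: powr_divide divide_right_mono)
    finally have "\<Lambda> * min 1 (norm (X \<omega> - Y \<omega>) / h) \<le> \<Lambda> * ((1 + V \<omega> powr \<rho>) / (T * h) powr r)"
      using \<Lambda> by (rule mult_left_mono)
    then show ?thesis
      using kernel_prod_diff_le[OF h, of x "X \<omega>" "Y \<omega>"] unfolding a_def \<Lambda>_def by simp
  qed
  have "ennreal \<bar>kernel_prod K h x (X \<omega>) - kernel_prod K h x (Y \<omega>)\<bar>
      \<le> ennreal a * (1 + ennreal (V \<omega> powr \<rho>))"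
    if "norm (X \<omega> - Y \<omega>) \<le> V \<omega> / T" for \<omega>
    using ennreal_leI[OF pointwise[OF that]] a by (simp add: ennreal_mult ennreal_plus)
  then have "(\<integral>\<^sup>+\<omega>. ennreal \<bar>kernel_prod K h x (X \<omega>) - kernel_prod K h x (Y \<omega>)\<bar> \<partial>M)
      \<le> (\<integral>\<^sup>+\<omega>. ennreal a * (1 + ennreal (V \<omega> powr \<rho>)) \<partial>M)"
    using close by (intro nn_integral_mono_AE) (auto elim!: eventually_mono)
  also have "\<dots> = ennreal a * (1 + (\<integral>\<^sup>+\<omega>. ennreal (V \<omega> powr \<rho>) \<partial>M))"
    by (simp add: nn_integral_cmult nn_integral_add emeasure_space_1)
  also have "\<dots> \<le> ennreal (a * (1 + CV))"
    using moment a CV by (simp add: ennreal_mult ennreal_plus[symmetric] add_left_mono mult_left_mono)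
  finally show ?thesis
    using a CV by (intro integral_real_bounded) (auto simp: a_def \<Lambda>_def)
qed

lemma expectation_kernel_prod_le:
  fixes X Y :: "'a \<Rightarrow> real^'d" and x :: "real^'d"
  assumes M: "prob_space M" and X: "X \<in> borel_measurable M"
    and Y: "distributed M lborel Y (\<lambda>y. ennreal (F y))"
    and F_le: "\<And>y. y \<in> cbox (x - (c * h) *\<^sub>R One) (x + (c * h) *\<^sub>R One) \<Longrightarrow> F y \<le> Fm"
    and Fm: "0 \<le> Fm"
    and V: "V \<in> borel_measurable M"
    and close: "AE \<omega> in M. norm (X \<omega> - Y \<omega>) \<le> V \<omega> / T"
    and moment: "(\<integral>\<^sup>+\<omega>. ennreal (V \<omega> powr \<rho>) \<partial>M) \<le> ennreal CV" and CV: "0 \<le> CV"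
    and r: "0 < r" "r \<le> 1" "r \<le> \<rho>" and T: "0 < T" and h: "0 < h"
  shows "(\<integral>\<omega>. kernel_prod K h x (X \<omega>) \<partial>M)
    \<le> B ^ CARD('d) * Fm * (2 * c * h) ^ CARD('d)
      + max B 1 ^ CARD('d) * max 2 (L * CARD('d)) * (1 + CV) / (T * h) powr r"
proof -
  interpret prob_space M by (rule M)
  have Y_meas: "Y \<in> borel_measurable M" using distributed_measurable[OF Y] by simp
  note integrable = integrable_kernel_prod[OF finite_measure X] integrable_kernel_prod[OF finite_measure Y_meas]
  have "(\<integral>\<omega>. kernel_prod K h x (X \<omega>) \<partial>M)
      = (\<integral>\<omega>. kernel_prod K h x (Y \<omega>) \<partial>M) + (\<integral>\<omega>. kernel_prod K h x (X \<omega>) - kernel_prod K h x (Y \<omega>) \<partial>M)"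
    using integrable by simp
  moreover have "(\<integral>\<omega>. kernel_prod K h x (X \<omega>) - kernel_prod K h x (Y \<omega>) \<partial>M)
      \<le> (\<integral>\<omega>. \<bar>kernel_prod K h x (X \<omega>) - kernel_prod K h x (Y \<omega>)\<bar> \<partial>M)"
    using integrable by (intro integral_mono) auto
  moreover have "(\<integral>\<omega>. kernel_prod K h x (Y \<omega>) \<partial>M) \<le> B ^ CARD('d) * Fm * (2 * c * h) ^ CARD('d)"
    by (rule expectation_kernel_prod_le_density[OF M Y _ Fm h]) (rule F_le)
  ultimately show ?thesis
    using expectation_kernel_prod_diff_le[where x=x, OF M X Y_meas V close moment CV r T h]
    by linarith
qed

lemma weight_nonneg: "0 < h \<Longrightarrow> 0 \<le> weight K X T h u x t \<omega>"
  unfolding weight_eq_kernel_prod by (simp add: Kh_nonneg kernel_prod_nonneg)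

lemma integrable_weight:
  assumes "finite_measure M" "X T t \<in> borel_measurable M"
  shows "integrable M (weight K X T h u x t)"
  unfolding weight_eq_kernel_prod using integrable_kernel_prod[OF assms] by simp

lemma expectation_weight_le:
  fixes X :: "nat \<Rightarrow> nat \<Rightarrow> 'a \<Rightarrow> real^'d" and x :: "real^'d"
  assumes M: "prob_space M" and X: "X T t \<in> borel_measurable M"
    and Y: "distributed M lborel Y (\<lambda>y. ennreal (F y))"
    and F_le: "\<And>y. y \<in> cbox (x - (c * h) *\<^sub>R One) (x + (c * h) *\<^sub>R One) \<Longrightarrow> F y \<le> Fm"
    and Fm: "0 \<le> Fm"
    and V: "V \<in> borel_measurable M"
    and close: "AE \<omega> in M. norm (X T t \<omega> - Y \<omega>) \<le> V \<omega> / real T"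
    and moment: "(\<integral>\<^sup>+\<omega>. ennreal (V \<omega> powr \<rho>) \<partial>M) \<le> ennreal CV" and CV: "0 \<le> CV"
    and r: "0 < r" "r \<le> 1" "r \<le> \<rho>" and T: "0 < T" and h: "0 < h"
  shows "(\<integral>\<omega>. weight K X T h u x t \<omega> \<partial>M)
    \<le> Kh K h (u - real t / real T) * (B ^ CARD('d) * Fm * (2 * c) ^ CARD('d)
      + max B 1 ^ CARD('d) * max 2 (L * CARD('d)) * (1 + CV)
        / (real T powr r * h powr (real CARD('d) + r)))"
proof -
  define k where "k = Kh K h (u - real t / real T) / h ^ CARD('d)"
  have k: "0 \<le> k" unfolding k_def using h by (simp add: Kh_nonneg)
  have "(\<integral>\<omega>. weight K X T h u x t \<omega> \<partial>M) = k * (\<integral>\<omega>. kernel_prod K h x (X T t \<omega>) \<partial>M)"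
    unfolding weight_eq_kernel_prod k_def by simp
  also have "\<dots> \<le> k * (B ^ CARD('d) * Fm * (2 * c * h) ^ CARD('d)
      + max B 1 ^ CARD('d) * max 2 (L * CARD('d)) * (1 + CV) / (real T * h) powr r)"
    using T by (intro mult_left_mono k expectation_kernel_prod_le[OF M X Y F_le Fm V close moment CV r]) (simp_all add: h)
  also have "(real T * h) powr r = real T powr r * h powr (real CARD('d) + r) / h ^ CARD('d)"
    using T h by (simp add: powr_mult powr_add powr_realpow)
  also have "k * (B ^ CARD('d) * Fm * (2 * c * h) ^ CARD('d)
      + max B 1 ^ CARD('d) * max 2 (L * CARD('d)) * (1 + CV)
        / (real T powr r * h powr (real CARD('d) + r) / h ^ CARD('d)))
    = Kh K h (u - real t / real T) * (B ^ CARD('d) * Fm * (2 * c) ^ CARD('d)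
      + max B 1 ^ CARD('d) * max 2 (L * CARD('d)) * (1 + CV)
        / (real T powr r * h powr (real CARD('d) + r)))"
    unfolding k_def using h by (simp add: power_mult_distrib divide_simps) (simp add: algebra_simps)
  finally show ?thesis .
qed

section \<open>Bias of the local linear fit\<close>

lemma weight_nonzero_imp_near:
  fixes X :: "nat \<Rightarrow> nat \<Rightarrow> 'a \<Rightarrow> real^'d" and x :: "real^'d"
  assumes h: "0 < h" and W: "weight K X T h u x t \<omega> \<noteq> 0"
  shows "\<bar>real t / real T - u\<bar> \<le> c * h" "norm (X T t \<omega> - x) \<le> real CARD('d) * (c * h)"
proof -
  have "Kh K h (u - real t / real T) \<noteq> 0" "kernel_prod K h x (X T t \<omega>) \<noteq> 0"
    using W unfolding weight_eq_kernel_prod by auto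
  then show "\<bar>real t / real T - u\<bar> \<le> c * h" "norm (X T t \<omega> - x) \<le> real CARD('d) * (c * h)"
    using Kh_eq_0[OF h] kernel_prod_eq_0[OF h] norm_diff_le_of_mem_cube
    by (force simp: abs_minus_commute)+
qed

lemma norm_design_row_le:
  fixes X :: "nat \<Rightarrow> nat \<Rightarrow> 'a \<Rightarrow> real^'d" and x :: "real^'d"
  assumes h: "0 < h" and W: "weight K X T h u x t \<omega> \<noteq> 0"
  shows "norm (design_row X T h u x t \<omega>) \<le> 1 + c + real CARD('d) * c"
proof -
  define a where "a = (real t / real T - u) / h"
  define v where "v = (1 / h) *\<^sub>R (X T t \<omega> - x)"
  have "norm (design_row X T h u x t \<omega>) \<le> norm (1::real) + norm (a, v)"
    unfolding design_row_def a_def v_def by (rule norm_Pair_le)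
  also have "\<dots> \<le> 1 + (norm a + norm v)"
    using norm_Pair_le[of a v] by simp
  also have "\<dots> \<le> 1 + (c + real CARD('d) * c)"
    using weight_nonzero_imp_near[OF h W] h unfolding a_def v_def
    by (intro add_left_mono add_mono) (simp_all add: abs_divide pos_divide_le_eq mult_ac)
  finally show ?thesis by simp
qed

lemma abs_bias_residual_le:
  fixes X :: "nat \<Rightarrow> nat \<Rightarrow> 'a \<Rightarrow> real^'d" and x :: "real^'d"
    and Dm :: "real \<times> (real^'d) \<Rightarrow> (real \<times> (real^'d)) \<Rightarrow>\<^sub>L real"
  assumes h: "0 < h" and W: "weight K X T h u x t \<omega> \<noteq> 0" and small: "real CARD('d) * c * h \<le> 1"
    and dm: "\<And>p. p \<in> {0..1} \<times> cball 0 (R + 1) \<Longrightarrow>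
      ((\<lambda>(u, y). m u y) has_derivative blinfun_apply (Dm p)) (at p within {0..1} \<times> cball 0 (R + 1))"
    and d2m: "\<And>p. p \<in> {0..1} \<times> cball 0 (R + 1) \<Longrightarrow>
      (Dm has_derivative blinfun_apply (D2m p)) (at p within {0..1} \<times> cball 0 (R + 1))"
    and M2: "\<And>p. p \<in> {0..1} \<times> cball 0 (R + 1) \<Longrightarrow> norm (D2m p) \<le> M2"
    and u: "u \<in> {0..1}" and x: "norm x \<le> R" and t: "t \<in> {1..T}"
  shows "\<bar>m (real t / real T) (X T t \<omega>) - inner (design_row X T h u x t \<omega>) (mfrak m Dm h u x)\<bar>
    \<le> M2 * (1 + (real CARD('d))\<^sup>2) * c\<^sup>2 * h\<^sup>2"
proof -
  define d where "d = real CARD('d)"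
  define s where "s = real t / real T"
  define z where "z = X T t \<omega>"
  have su: "\<bar>s - u\<bar> \<le> c * h" and zx: "norm (z - x) \<le> d * (c * h)"
    using weight_nonzero_imp_near[OF h W] unfolding s_def z_def d_def by auto
  have "s \<in> {0..1}" using t unfolding s_def by auto
  moreover have "norm z \<le> R + 1"
    using norm_triangle_ineq[of x "z - x"] x zx small by (simp add: d_def mult_ac)
  ultimately have sz: "(s, z) \<in> {0..1} \<times> cball 0 (R + 1)" by simp
  have M2_nonneg: "0 \<le> M2" using M2[OF sz] norm_ge_zero order_trans by blast
  have "(norm ((s, z) - (u, x)))\<^sup>2 = (s - u)\<^sup>2 + (norm (z - x))\<^sup>2"
    by (simp add: norm_Pair)
  also have "\<dots> \<le> (c * h)\<^sup>2 + (d * (c * h))\<^sup>2"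
    using power_mono[OF su abs_ge_zero, of 2] power_mono[OF zx norm_ge_zero, of 2] by simp
  finally have dist2: "(norm ((s, z) - (u, x)))\<^sup>2 \<le> (1 + d\<^sup>2) * c\<^sup>2 * h\<^sup>2"
    by (simp add: power_mult_distrib algebra_simps)
  have "\<bar>m s z - inner (design_row X T h u x t \<omega>) (mfrak m Dm h u x)\<bar>
      = \<bar>(\<lambda>(u, y). m u y) (s, z) - (\<lambda>(u, y). m u y) (u, x) - Dm (u, x) ((s, z) - (u, x))\<bar>"
    using h unfolding inner_design_row_mfrak[OF h[THEN less_imp_neq, symmetric]] s_def z_def by simp
  also have "\<dots> \<le> M2 * (norm ((s, z) - (u, x)))\<^sup>2"
    using u x by (intro taylor_remainder_le[OF _ dm d2m M2 _ sz]) (auto simp: convex_Times)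
  also have "\<dots> \<le> M2 * ((1 + d\<^sup>2) * c\<^sup>2 * h\<^sup>2)"
    using dist2 M2_nonneg by (rule mult_left_mono)
  finally show ?thesis unfolding s_def z_def d_def by (simp add: mult_ac)
qed

lemma norm_bias_summand_le:
  fixes X :: "nat \<Rightarrow> nat \<Rightarrow> 'a \<Rightarrow> real^'d" and x :: "real^'d"
    and Dm :: "real \<times> (real^'d) \<Rightarrow> (real \<times> (real^'d)) \<Rightarrow>\<^sub>L real"
  assumes h: "0 < h" and small: "real CARD('d) * c * h \<le> 1"
    and dm: "\<And>p. p \<in> {0..1} \<times> cball 0 (R + 1) \<Longrightarrow>
      ((\<lambda>(u, y). m u y) has_derivative blinfun_apply (Dm p)) (at p within {0..1} \<times> cball 0 (R + 1))"
    and d2m: "\<And>p. p \<in> {0..1} \<times> cball 0 (R + 1) \<Longrightarrow>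
      (Dm has_derivative blinfun_apply (D2m p)) (at p within {0..1} \<times> cball 0 (R + 1))"
    and M2: "\<And>p. p \<in> {0..1} \<times> cball 0 (R + 1) \<Longrightarrow> norm (D2m p) \<le> M2"
    and u: "u \<in> {0..1}" and x: "norm x \<le> R" and t: "t \<in> {1..T}"
  shows "norm ((weight K X T h u x t \<omega> * (m (real t / real T) (X T t \<omega>)
              - inner (design_row X T h u x t \<omega>) (mfrak m Dm h u x))) *\<^sub>R design_row X T h u x t \<omega>)
    \<le> M2 * (1 + (real CARD('d))\<^sup>2) * c\<^sup>2 * (1 + c + real CARD('d) * c) * h\<^sup>2
      * weight K X T h u x t \<omega>"
proof (cases "weight K X T h u x t \<omega> = 0")
  case False
  have W: "0 \<le> weight K X T h u x t \<omega>" using h by (rule weight_nonneg)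
  have "norm ((weight K X T h u x t \<omega> * (m (real t / real T) (X T t \<omega>)
              - inner (design_row X T h u x t \<omega>) (mfrak m Dm h u x))) *\<^sub>R design_row X T h u x t \<omega>)
      = weight K X T h u x t \<omega>
        * \<bar>m (real t / real T) (X T t \<omega>) - inner (design_row X T h u x t \<omega>) (mfrak m Dm h u x)\<bar>
        * norm (design_row X T h u x t \<omega>)"
    using W by (simp add: abs_mult)
  also have "\<dots> \<le> weight K X T h u x t \<omega> * (M2 * (1 + (real CARD('d))\<^sup>2) * c\<^sup>2 * h\<^sup>2)
      * (1 + c + real CARD('d) * c)"
    using W abs_bias_residual_le[OF h False small dm d2m M2 u x t] norm_design_row_le[OF h False]
    by (intro mult_mono mult_left_mono) auto
  finally show ?thesis by (simp add: mult_ac)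
qed simp

lemma norm_expectation_bias_vec_le_of_bounds:
  fixes X :: "nat \<Rightarrow> nat \<Rightarrow> 'a \<Rightarrow> real^'d" and x :: "real^'d"
  assumes M: "finite_measure M" and X: "\<And>t. X T t \<in> borel_measurable M"
    and h: "0 < h" and Th: "1 \<le> real T * h"
    and summand: "\<And>t \<omega>. t \<in> {1..T} \<Longrightarrow>
      norm ((weight K X T h u x t \<omega> * (m (real t / real T) (X T t \<omega>)
              - inner (design_row X T h u x t \<omega>) (mfrak m Dm h u x))) *\<^sub>R design_row X T h u x t \<omega>)
      \<le> C * h\<^sup>2 * weight K X T h u x t \<omega>"
    and expectation_weight: "\<And>t. t \<in> {1..T} \<Longrightarrow>
      (\<integral>\<omega>. weight K X T h u x t \<omega> \<partial>M) \<le> Kh K h (u - real t / real T) * W"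
    and C: "0 \<le> C" and W: "0 \<le> W"
  shows "norm (\<integral>\<omega>. bias_vec K m Dm X T h u x \<omega> \<partial>M) \<le> C * W * ((2 * c + 1) * B) * h\<^sup>2"
proof (cases "integrable M (bias_vec K m Dm X T h u x)")
  case False
  then show ?thesis using C W bound_nonneg support_pos by (simp add: not_integrable_integral_eq)
next
  case True
  have T: "0 < T" using Th by (cases T) auto
  have integrable_weight: "integrable M (weight K X T h u x t)" for t
    by (rule integrable_weight[where X=X and T=T and t=t, OF M X])
  have "norm (bias_vec K m Dm X T h u x \<omega>) \<le> (1 / real T) * (\<Sum>t\<in>{1..T}. C * h\<^sup>2 * weight K X T h u x t \<omega>)"
    for \<omega>
  proof -
    have "norm (bias_vec K m Dm X T h u x \<omega>)
        = (1 / real T) * norm (\<Sum>t\<in>{1..T}. (weight K X T h u x t \<omega> * (m (real t / real T) (X T t \<omega>)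
              - inner (design_row X T h u x t \<omega>) (mfrak m Dm h u x))) *\<^sub>R design_row X T h u x t \<omega>)"
      unfolding bias_vec_def by (simp only: norm_scaleR) simp
    also have "\<dots> \<le> (1 / real T) * (\<Sum>t\<in>{1..T}. C * h\<^sup>2 * weight K X T h u x t \<omega>)"
      by (intro mult_left_mono order_trans[OF norm_sum] sum_mono summand) auto
    finally show ?thesis .
  qed
  then have "norm (\<integral>\<omega>. bias_vec K m Dm X T h u x \<omega> \<partial>M)
      \<le> (\<integral>\<omega>. (1 / real T) * (\<Sum>t\<in>{1..T}. C * h\<^sup>2 * weight K X T h u x t \<omega>) \<partial>M)"
    using True integrable_weight
    by (intro order_trans[OF integral_norm_bound] integral_mono) auto
  also have "\<dots> = C * h\<^sup>2 / real T * (\<Sum>t\<in>{1..T}. \<integral>\<omega>. weight K X T h u x t \<omega> \<partial>M)"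
    using integrable_weight by (simp add: sum_distrib_left)
  also have "\<dots> \<le> C * h\<^sup>2 / real T * (\<Sum>t\<in>{1..T}. Kh K h (u - real t / real T) * W)"
    using C by (intro mult_left_mono sum_mono expectation_weight) auto
  also have "\<dots> = C * h\<^sup>2 * W / real T * (\<Sum>t\<in>{1..T}. Kh K h (u - real t / real T))"
    by (simp add: sum_distrib_left sum_distrib_right mult_ac)
  also have "\<dots> \<le> C * h\<^sup>2 * W / real T * ((2 * c + 1) * B * real T)"
    using C W by (intro mult_left_mono sum_Kh_grid_le h Th) auto
  also have "\<dots> = C * W * ((2 * c + 1) * B) * h\<^sup>2"
    using T by simp
  finally show ?thesis .
qed

lemma expectation_weight_le_locally_stationary:
  fixes X :: "nat \<Rightarrow> nat \<Rightarrow> 'a \<Rightarrow> real^'d" and Xu :: "real \<Rightarrow> int \<Rightarrow> 'a \<Rightarrow> real^'d"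
    and x :: "real^'d"
  assumes M: "prob_space M" and X: "X T t \<in> borel_measurable M" and t: "t \<in> {1..T}"
    and approx: "AE \<omega> in M. norm (X T t \<omega> - Xu (real t / real T) (int t) \<omega>)
      \<le> (\<bar>real t / real T - real t / real T\<bar> + 1 / real T) * V \<omega>"
    and V: "V \<in> borel_measurable M"
    and moment: "(\<integral>\<^sup>+\<omega>. ennreal (V \<omega> powr \<rho>) \<partial>M) \<le> ennreal CU"
    and density: "distributed M lborel (Xu (real t / real T) (int t))
      (\<lambda>y. ennreal (f (real t / real T) y))"
    and f_le: "\<And>y. norm y \<le> R + 1 \<Longrightarrow> f (real t / real T) y \<le> Fm" and Fm: "0 \<le> Fm"
    and r: "0 < r" "r \<le> 1" "r \<le> \<rho>"
    and h: "0 < h" and small: "real CARD('d) * c * h \<le> 1" and x: "norm x \<le> R"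
    and rate: "max B 1 ^ CARD('d) * max 2 (L * CARD('d)) * (1 + max 0 CU)
      / (real T powr r * h powr (real CARD('d) + r)) \<le> 1"
  shows "(\<integral>\<omega>. weight K X T h u x t \<omega> \<partial>M)
    \<le> Kh K h (u - real t / real T) * (B ^ CARD('d) * Fm * (2 * c) ^ CARD('d) + 1)"
proof -
  have T: "0 < T" using t by auto
  have "f (real t / real T) y \<le> Fm" if "y \<in> cbox (x - (c * h) *\<^sub>R One) (x + (c * h) *\<^sub>R One)" for y
  proof (rule f_le)
    have "norm y \<le> norm x + norm (y - x)" using norm_triangle_ineq[of x "y - x"] by simp
    then show "norm y \<le> R + 1"
      using norm_diff_le_of_mem_cube[OF that] x small by (simp add: mult.assoc)
  qed
  moreover have "AE \<omega> in M. norm (X T t \<omega> - Xu (real t / real T) (int t) \<omega>) \<le> V \<omega> / real T"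
    using approx by simp
  moreover have "(\<integral>\<^sup>+\<omega>. ennreal (V \<omega> powr \<rho>) \<partial>M) \<le> ennreal (max 0 CU)"
    using moment by (simp only: ennreal_max_0)
  ultimately have "(\<integral>\<omega>. weight K X T h u x t \<omega> \<partial>M)
      \<le> Kh K h (u - real t / real T) * (B ^ CARD('d) * Fm * (2 * c) ^ CARD('d)
        + max B 1 ^ CARD('d) * max 2 (L * CARD('d)) * (1 + max 0 CU)
          / (real T powr r * h powr (real CARD('d) + r)))"
    using T by (intro expectation_weight_le[where X=X and T=T and t=t, OF M X density _ Fm V _ _ _ r])
      (simp_all add: h)
  also have "\<dots> \<le> Kh K h (u - real t / real T) * (B ^ CARD('d) * Fm * (2 * c) ^ CARD('d) + 1)"
    using rate h by (intro mult_left_mono Kh_nonneg) auto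
  finally show ?thesis .
qed

lemma norm_expectation_bias_vec_le:
  fixes X :: "nat \<Rightarrow> nat \<Rightarrow> 'a \<Rightarrow> real^'d" and Xu :: "real \<Rightarrow> int \<Rightarrow> 'a \<Rightarrow> real^'d"
    and x :: "real^'d" and Dm :: "real \<times> (real^'d) \<Rightarrow> (real \<times> (real^'d)) \<Rightarrow>\<^sub>L real"
  assumes M: "prob_space M" and X: "\<And>t. X T t \<in> borel_measurable M"
    and approx: "\<And>t s. s \<in> {0..1} \<Longrightarrow> t \<in> {1..T} \<Longrightarrow>
      AE \<omega> in M. norm (X T t \<omega> - Xu s (int t) \<omega>) \<le> (\<bar>real t / real T - s\<bar> + 1 / real T) * V t s \<omega>"
    and V: "\<And>t s. V t s \<in> borel_measurable M"
    and moment: "\<And>t s. s \<in> {0..1} \<Longrightarrow> t \<in> {1..T} \<Longrightarrow>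
      (\<integral>\<^sup>+\<omega>. ennreal (V t s \<omega> powr \<rho>) \<partial>M) \<le> ennreal CU"
    and density: "\<And>s t. s \<in> {0..1} \<Longrightarrow> distributed M lborel (Xu s t) (\<lambda>y. ennreal (f s y))"
    and f_le: "\<And>s y. s \<in> {0..1} \<Longrightarrow> norm y \<le> R + 1 \<Longrightarrow> f s y \<le> Fm" and Fm: "0 \<le> Fm"
    and dm: "\<And>p. p \<in> {0..1} \<times> UNIV \<Longrightarrow>
      ((\<lambda>(u, y). m u y) has_derivative blinfun_apply (Dm p)) (at p within {0..1} \<times> UNIV)"
    and d2m: "\<And>p. p \<in> {0..1} \<times> UNIV \<Longrightarrow>
      (Dm has_derivative blinfun_apply (D2m p)) (at p within {0..1} \<times> UNIV)"
    and M2: "\<And>p. p \<in> {0..1} \<times> cball 0 (R + 1) \<Longrightarrow> norm (D2m p) \<le> M2"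
    and r: "0 < r" "r \<le> 1" "r \<le> \<rho>"
    and h: "0 < h" and small: "real CARD('d) * c * h \<le> 1" and Th: "1 \<le> real T * h"
    and rate: "max B 1 ^ CARD('d) * max 2 (L * CARD('d)) * (1 + max 0 CU)
      / (real T powr r * h powr (real CARD('d) + r)) \<le> 1"
    and u: "u \<in> {0..1}" and x: "norm x \<le> R"
  shows "norm (\<integral>\<omega>. bias_vec K m Dm X T h u x \<omega> \<partial>M)
    \<le> M2 * (1 + (real CARD('d))\<^sup>2) * c\<^sup>2 * (1 + c + real CARD('d) * c)
      * (B ^ CARD('d) * Fm * (2 * c) ^ CARD('d) + 1) * ((2 * c + 1) * B) * h\<^sup>2"
proof -
  have s: "real t / real T \<in> {0..1}" if "t \<in> {1..T}" for t using that by auto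
  have "(u, x) \<in> {0..1} \<times> cball 0 (R + 1)" using u x by simp
  then have M2_nonneg: "0 \<le> M2" using M2 norm_ge_zero order_trans by blast
  have "(\<integral>\<omega>. weight K X T h u x t \<omega> \<partial>M)
      \<le> Kh K h (u - real t / real T) * (B ^ CARD('d) * Fm * (2 * c) ^ CARD('d) + 1)"
    if t: "t \<in> {1..T}" for t
    by (rule expectation_weight_le_locally_stationary[where X=X and T=T and t=t and Xu=Xu and f=f,
          OF M X[of t] t approx[OF s[OF t] t] V[of t "real t / real T"] moment[OF s[OF t] t]
          density[of "real t / real T" "int t", OF s[OF t]] f_le[OF s[OF t]]
          Fm r h small x rate])
  moreover have "norm ((weight K X T h u x t \<omega> * (m (real t / real T) (X T t \<omega>)
        - inner (design_row X T h u x t \<omega>) (mfrak m Dm h u x))) *\<^sub>R design_row X T h u x t \<omega>)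
      \<le> M2 * (1 + (real CARD('d))\<^sup>2) * c\<^sup>2 * (1 + c + real CARD('d) * c) * h\<^sup>2 * weight K X T h u x t \<omega>"
    if "t \<in> {1..T}" for t \<omega>
  proof (rule norm_bias_summand_le[OF h small _ _ M2 u x that])
    have "{0..1} \<times> cball 0 (R + 1) \<subseteq> {0..1::real} \<times> (UNIV :: (real^'d) set)" by auto
    then show "((\<lambda>(u, y). m u y) has_derivative blinfun_apply (Dm p)) (at p within {0..1} \<times> cball 0 (R + 1))"
      and "(Dm has_derivative blinfun_apply (D2m p)) (at p within {0..1} \<times> cball 0 (R + 1))"
      if "p \<in> {0..1} \<times> cball 0 (R + 1)" for p
      using dm d2m that by (meson has_derivative_subset subsetD)+
  qed
  ultimately show ?thesis
    using M2_nonneg Fm bound_nonneg support_pos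
    by (intro norm_expectation_bias_vec_le_of_bounds[where X=X and T=T,
          OF prob_space.finite_measure[OF M] X h Th])
      (simp_all add: zero_le_mult_iff)
qed

end

theorem mainTheorem3:
  fixes M :: "'a measure"
    and X :: "nat \<Rightarrow> nat \<Rightarrow> 'a \<Rightarrow> (real^'d::finite)"
    and Xu :: "real \<Rightarrow> int \<Rightarrow> 'a \<Rightarrow> (real^'d)"
    and U :: "nat \<Rightarrow> nat \<Rightarrow> real \<Rightarrow> 'a \<Rightarrow> real"
    and CU \<rho> :: real
    and f :: "real \<Rightarrow> (real^'d) \<Rightarrow> real"
    and fu :: "real \<Rightarrow> (real^'d) \<Rightarrow> real"
    and fx :: "real \<Rightarrow> (real^'d) \<Rightarrow> (real^'d)"
    and A \<beta> :: real
    and m :: "real \<Rightarrow> (real^'d) \<Rightarrow> real"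
    and Dm :: "real \<times> (real^'d) \<Rightarrow> (real \<times> (real^'d)) \<Rightarrow>\<^sub>L real"
    and D2m :: "real \<times> (real^'d) \<Rightarrow> (real \<times> (real^'d)) \<Rightarrow>\<^sub>L ((real \<times> (real^'d)) \<Rightarrow>\<^sub>L real)"
    and K :: "real \<Rightarrow> real"
    and C1 :: real
    and S :: "(real^'d) set"
    and h :: "nat \<Rightarrow> real"
  assumes prob: "prob_space M"
    and X_meas: "\<And>T t. X T t \<in> borel_measurable M"
    \<comment> \<open>(C1) local stationarity\<close>
    and rho_pos: "\<rho> > 0"
    and C1_stat: "\<And>u. u \<in> {0..1} \<Longrightarrow> strictly_stationary M (Xu u)"
    and C1_approx: "\<And>T t u. u \<in> {0..1} \<Longrightarrow> t \<in> {1..T} \<Longrightarrow>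
        AE \<omega> in M. norm (X T t \<omega> - Xu u (int t) \<omega>)
                     \<le> (\<bar>real t / real T - u\<bar> + 1 / real T) * U T t u \<omega>"
    and U_meas: "\<And>T t u. U T t u \<in> borel_measurable M"
    and U_moment: "\<And>T t u. u \<in> {0..1} \<Longrightarrow> t \<in> {1..T} \<Longrightarrow>
        (\<integral>\<^sup>+\<omega>. ennreal (U T t u \<omega> powr \<rho>) \<partial>M) \<le> ennreal CU"
    \<comment> \<open>(C2) density with continuous partial derivatives\<close>
    and C2_density: "\<And>u t. u \<in> {0..1} \<Longrightarrow>
        distributed M lborel (Xu u t) (\<lambda>y. ennreal (f u y))"
    and C2_du: "\<And>u y. u \<in> {0..1} \<Longrightarrow>
        ((\<lambda>v. f v y) has_real_derivative fu u y) (at u within {0..1})"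
    and C2_dx: "\<And>u y. u \<in> {0..1} \<Longrightarrow>
        (f u has_derivative (\<lambda>v. inner (fx u y) v)) (at y)"
    and C2_cont_u: "continuous_on ({0..1} \<times> UNIV) (\<lambda>(u, y). fu u y)"
    and C2_cont_x: "continuous_on ({0..1} \<times> UNIV) (\<lambda>(u, y). fx u y)"
    \<comment> \<open>(C3) strong mixing\<close>
    and C3: "\<And>k. k \<ge> 1 \<Longrightarrow> alpha_mixing M X k \<le> A * real k powr (- \<beta>)"
    \<comment> \<open>(C4) m twice continuously differentiable in (u,x)\<close>
    and C4_d1: "\<And>p. p \<in> {0..1} \<times> UNIV \<Longrightarrow>
        ((\<lambda>(u, y). m u y) has_derivative blinfun_apply (Dm p)) (at p within {0..1} \<times> UNIV)"
    and C4_d2: "\<And>p. p \<in> {0..1} \<times> UNIV \<Longrightarrow>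
        (Dm has_derivative blinfun_apply (D2m p)) (at p within {0..1} \<times> UNIV)"
    and C4_cont: "continuous_on ({0..1} \<times> UNIV) D2m"
    \<comment> \<open>(C5) kernel\<close>
    and K_nonneg: "\<And>v. K v \<ge> 0"
    and K_symm: "\<And>v. K (- v) = K v"
    and K_bdd: "bounded (range K)"
    and K_lip: "\<exists>L. L-lipschitz_on UNIV K"
    and K_supp: "\<And>v. \<bar>v\<bar> > C1 \<Longrightarrow> K v = 0"
    \<comment> \<open>S compact and (CS)\<close>
    and S_compact: "compact S"
    and CS: "\<exists>cS>0. \<forall>x\<in>S. ereal cS \<le> Liminf (at_right 0)
        (\<lambda>b. ereal (measure lborel (S \<inter> box (x - (C1 * b) *\<^sub>R One) (x + (C1 * b) *\<^sub>R One))
                     / b ^ CARD('d)))"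
    \<comment> \<open>bandwidth\<close>
    and h_pos: "\<And>T. h T > 0"
    and h_lim: "h \<longlonglongrightarrow> 0"
    and h_rate1: "(\<lambda>T. 1 / (real T powr (min \<rho> 1) * h T powr (real CARD('d) + min \<rho> 1)))
                  \<longlonglongrightarrow> 0"
    and h_rate2: "filterlim (\<lambda>T. real T * h T ^ (CARD('d) + 1)) at_top sequentially"
  shows "\<exists>C. eventually (\<lambda>T. \<forall>u\<in>{0..1}. \<forall>x\<in>S.
            norm (integral\<^sup>L M (bias_vec K m Dm X T (h T) u x))
            \<le> C * (1 / (real T powr (min \<rho> 1) * h T powr (real CARD('d) - 1)) + (h T)\<^sup>2))
          sequentially"
proof -
  interpret prob_space M by (rule prob)
  define r where "r = min \<rho> 1"
  have r: "0 < r" "r \<le> 1" "r \<le> \<rho>" unfolding r_def using rho_pos by auto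
  obtain B where B: "\<And>v. K v \<le> B"
    using K_bdd unfolding bounded_iff by (metis rangeI real_norm_def abs_le_D1)
  obtain L where L: "L-lipschitz_on UNIV K" using K_lip by blast
  define c where "c = max C1 1"
  interpret compact_kernel K B L c
    using K_nonneg B L K_supp by unfold_locales (auto simp: c_def)
  obtain R where R_pos: "0 < R" and R: "\<And>x. x \<in> S \<Longrightarrow> norm x \<le> R"
    using compact_imp_bounded[OF S_compact] unfolding bounded_pos by blast
  have "bounded (D2m ` ({0..1} \<times> cball 0 (R + 1)))"
    by (intro compact_imp_bounded compact_continuous_image continuous_on_subset[OF C4_cont]
        compact_Times compact_Icc compact_cball) auto
  then obtain M2 where M2_pos: "0 < M2"
    and M2: "\<And>p. p \<in> {0..1} \<times> cball 0 (R + 1) \<Longrightarrow> norm (D2m p) \<le> M2"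
    unfolding bounded_pos by blast
  obtain Fm where Fm_nonneg: "0 \<le> Fm"
    and Fm: "\<And>u y. u \<in> {0..1} \<Longrightarrow> y \<in> cball 0 (R + 1) \<Longrightarrow> f u y \<le> Fm"
    using upper_bound_on_Icc_times_compact[OF C2_du continuous_on_subset[OF C2_cont_u]
        continuous_at_imp_continuous_on compact_cball]
    by (metis C2_dx has_derivative_continuous atLeastAtMost_iff subset_UNIV Sigma_mono order_refl zero_le_one)
  define C where "C = M2 * (1 + (real CARD('d))\<^sup>2) * c\<^sup>2 * (1 + c + real CARD('d) * c)
      * (B ^ CARD('d) * Fm * (2 * c) ^ CARD('d) + 1) * ((2 * c + 1) * B)"
  have "0 \<le> C"
    using M2_pos Fm_nonneg bound_nonneg support_pos unfolding C_def by simp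
  then have weaken: "C * (h T)\<^sup>2 \<le> C * (1 / (real T powr r * h T powr (real CARD('d) - 1)) + (h T)\<^sup>2)"
    for T by (intro mult_left_mono) auto
  have "eventually (\<lambda>T. real CARD('d) * c * h T \<le> 1 \<and> 1 \<le> real T * h T) sequentially"
    by (rule eventually_bandwidth_small[OF h_pos h_lim h_rate2])
  moreover have "eventually (\<lambda>T. max B 1 ^ CARD('d) * max 2 (L * CARD('d)) * (1 + max 0 CU)
      * (1 / (real T powr r * h T powr (real CARD('d) + r))) < 1) sequentially"
    using tendsto_mult_left[OF h_rate1] unfolding r_def by (intro order_tendstoD(2)) auto
  ultimately have "eventually (\<lambda>T. \<forall>u\<in>{0..1}. \<forall>x\<in>S.
      norm (\<integral>\<omega>. bias_vec K m Dm X T (h T) u x \<omega> \<partial>M) \<le> C * (h T)\<^sup>2) sequentially"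
  proof eventually_elim
    case (elim T)
    show ?case
      unfolding C_def using elim R Fm
      by (intro ballI norm_expectation_bias_vec_le[where V="U T" and X=X and Xu=Xu and f=f and T=T,
          OF prob X_meas C1_approx U_meas U_moment C2_density _ Fm_nonneg C4_d1 C4_d2 M2 r h_pos]) auto
  qed
  then show ?thesis
    using weaken unfolding r_def by (intro exI[of _ C]) (auto elim!: eventually_mono intro: order_trans)
qed

end
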